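(* Suppose Assumptions 1, 2 and 3 (stated in the context) hold and $\|\vec L\|_1>0$. Fix an integer $K\ge 1$ and an initial point $x_0\in\mathbb{R}^d$. Run \textsc{signSGD} for $K$ iterations, i.e. for $k=0,\dots,K-1$ set $$x_{k+1}=x_k-\delta_k\,\mathrm{sign}(\tilde g_k),$$ where $\tilde g_k$ is a mini-batch stochastic gradient of size $n_k$ at $x_k$, with $$\delta_k=\frac{1}{\sqrt{\|\vec L\|_1 K}},\qquad n_k=K .$$ Let $N=K^2$ be the total number of stochastic gradient oracle calls. Then $$\left(\mathbb{E}\Big[\frac1K\sum_{k=0}^{K-1}\|g_k\|_1\Big]\right)^2\le \frac{1}{\sqrt N}\left[\sqrt{\|\vec L\|_1}\Big(f_0-f_*+\frac12\Big)+2\|\vec\sigma\|_1\right]^2 ,$$ where $g_k=\nabla f(x_k)$ and $f_0=f(x_0)$.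
   Context: $f:\mathbb{R}^d\to\mathbb{R}$ is differentiable with gradient $g(x)=\nabla f(x)$. Assumption 1: there is a constant $f_*$ with $f(x)\ge f_*$ for all $x$. Assumption 2: there is a vector $\vec L=(L_1,\dots,L_d)$ of non-negative constants such that for all $x,y$, $\big|f(y)-f(x)-g(x)^T(y-x)\big|\le \frac12\sum_{i=1}^d L_i(y_i-x_i)^2$. Assumption 3: upon query $x$, a stochastic gradient oracle returns a random vector $\tilde g(x)$, independent of all other oracle calls, with $\mathbb{E}[\tilde g(x)]=g(x)$ and $\mathbb{E}[(\tilde g(x)_i-g(x)_i)^2]\le\sigma_i^2$ for a vector $\vec\sigma=(\sigma_1,\dots,\sigma_d)$ of non-negative constants. A mini-batch stochastic gradient of size $n$ at $x$ is the average of $n$ independent oracle calls at $x$. $\mathrm{sign}$ acts componentwise, with $\mathrm{sign}(t)=1$ for $t>0$, $-1$ for $t<0$, $0$ for $t=0$. $\|\cdot\|_1$ is the $\ell_1$ norm. *)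

theory Defs
  imports "HOL-Probability.Probability"
begin

definition sign_vec :: "real^'d \<Rightarrow> real^'d" where
  "sign_vec v = (\<chi> i. sgn (v $ i))"

definition norm1 :: "real^'d \<Rightarrow> real" where
  "norm1 v = (\<Sum>i\<in>UNIV. \<bar>v $ i\<bar>)"

text \<open>The stochastic gradient oracle is modelled as
  \<open>G x w\<close> with fresh noise \<open>w\<close>; \<open>\<omega> (k,j)\<close> is the noise of the j-th oracle call
  in iteration k.\<close>
primrec signsgd_iter ::
  "(real^'d \<Rightarrow> 'w \<Rightarrow> real^'d) \<Rightarrow> real \<Rightarrow> nat \<Rightarrow> real^'d \<Rightarrow> (nat \<times> nat \<Rightarrow> 'w) \<Rightarrow> nat \<Rightarrow> real^'d"
where
  "signsgd_iter G \<delta> n x0 \<omega> 0 = x0"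
| "signsgd_iter G \<delta> n x0 \<omega> (Suc k) =
     (let x = signsgd_iter G \<delta> n x0 \<omega> k
      in x - \<delta> *\<^sub>R sign_vec ((1 / real n) *\<^sub>R (\<Sum>j<n. G x (\<omega> (k, j)))))"

end

theory Submission
  imports Defs
begin

text \<open>One signSGD step of length \<open>\<delta>\<close> from \<open>x\<close> decreases \<open>f\<close> by at least \<open>\<delta> \<parallel>g x\<parallel>\<^sub>1\<close>, up to
  the smoothness error \<open>\<delta>\<^sup>2 \<parallel>L\<parallel>\<^sub>1 / 2\<close> and a penalty \<open>2 \<delta> \<parallel>g\<^sup>~ - g x\<parallel>\<^sub>1\<close> for the coordinates
  where the mini-batch gradient \<open>g\<^sup>~\<close> has the wrong sign. Given the past, \<open>g\<^sup>~ - g x\<close> is an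
  average of \<open>n\<close> fresh independent centred samples, so its expected \<open>\<ell>\<^sub>1\<close> norm is at most
  \<open>\<parallel>\<sigma>\<parallel>\<^sub>1 / \<surd>n\<close>. Telescoping over \<open>K\<close> steps gives
  \<open>\<delta> \<Sum>\<^sub>k E \<parallel>g\<^sub>k\<parallel>\<^sub>1 \<le> f\<^sub>0 - f\<^sub>* + K (\<delta>\<^sup>2 \<parallel>L\<parallel>\<^sub>1 / 2 + 2 \<delta> \<parallel>\<sigma>\<parallel>\<^sub>1 / \<surd>n)\<close>, and the choice
  \<open>\<delta> = 1 / \<surd>(\<parallel>L\<parallel>\<^sub>1 K)\<close>, \<open>n = K\<close> balances the terms.\<close>

lemma sign_vec_nth [simp]: "sign_vec v $ i = sgn (v $ i)"
  by (simp add: sign_vec_def)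

lemma norm1_nonneg: "0 \<le> norm1 v"
  by (simp add: norm1_def sum_nonneg)

text \<open>If \<open>sgn b\<close> is not the sign of \<open>a\<close>, then \<open>\<bar>a\<bar> \<le> \<bar>b - a\<bar>\<close>.\<close>
lemma neg_mult_sgn_le: "- a * sgn b \<le> - \<bar>a\<bar> + 2 * \<bar>b - a\<bar>" for a b :: real
  by (cases "a > 0"; cases "b > 0"; cases "b = 0"; cases "a = 0") (auto simp: sgn_real_def)

lemma sign_step_descent:
  fixes f :: "real^'d \<Rightarrow> real" and g :: "real^'d \<Rightarrow> real^'d"
  assumes smooth: "\<And>x y. \<bar>f y - f x - g x \<bullet> (y - x)\<bar> \<le> 1/2 * (\<Sum>i\<in>UNIV. L $ i * (y $ i - x $ i)^2)"
    and L_nonneg: "\<And>i. 0 \<le> L $ i" and "0 \<le> \<delta>"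
  shows "\<delta> * norm1 (g x) + f (x - \<delta> *\<^sub>R sign_vec v)
     \<le> f x + \<delta>^2 / 2 * norm1 L + 2 * \<delta> * norm1 (v - g x)"
proof -
  define y where "y = x - \<delta> *\<^sub>R sign_vec v"
  have "g x \<bullet> (y - x) = (\<Sum>i\<in>UNIV. \<delta> * (- (g x $ i) * sgn (v $ i)))"
    by (simp add: y_def inner_vec_def algebra_simps)
  also have "\<dots> \<le> (\<Sum>i\<in>UNIV. \<delta> * (- \<bar>g x $ i\<bar> + 2 * \<bar>v $ i - g x $ i\<bar>))"
    by (intro sum_mono mult_left_mono neg_mult_sgn_le \<open>0 \<le> \<delta>\<close>)
  also have "\<dots> = - \<delta> * norm1 (g x) + 2 * \<delta> * norm1 (v - g x)"
    by (simp add: norm1_def sum_distrib_left sum.distrib sum_subtractf sum_negf algebra_simps)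
  finally have linear: "g x \<bullet> (y - x) \<le> - \<delta> * norm1 (g x) + 2 * \<delta> * norm1 (v - g x)" .
  have "(\<Sum>i\<in>UNIV. L $ i * (y $ i - x $ i)^2) \<le> (\<Sum>i\<in>UNIV. L $ i * \<delta>^2)"
  proof (intro sum_mono mult_left_mono L_nonneg)
    fix i
    have "(y $ i - x $ i)^2 = \<delta>^2 * (sgn (v $ i))^2"
      by (simp add: y_def power_mult_distrib)
    also have "\<dots> \<le> \<delta>^2"
      by (auto simp: sgn_real_def)
    finally show "(y $ i - x $ i)^2 \<le> \<delta>^2" .
  qed
  also have "\<dots> = \<delta>^2 * norm1 L"
    using L_nonneg by (simp add: norm1_def sum_distrib_right mult.commute)
  finally have quadratic: "(\<Sum>i\<in>UNIV. L $ i * (y $ i - x $ i)^2) \<le> \<delta>^2 * norm1 L" .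
  show ?thesis
    using abs_le_D1[OF smooth[of y x]] linear quadratic unfolding y_def[symmetric] by linarith
qed

context
  fixes P :: "'w measure" and S :: "'i set"
  assumes prob_P: "prob_space P" and S: "finite S"
begin

interpretation product_prob_space "\<lambda>_. P" S
  by (simp add: prob_P prob_space_imp_sigma_finite product_prob_space.intro
      product_prob_space_axioms.intro product_sigma_finite.intro)

lemma integral_PiM_prod_components:
  fixes h :: "'i \<Rightarrow> 'w \<Rightarrow> real"
  assumes "T \<subseteq> S" "\<And>t. t \<in> T \<Longrightarrow> integrable P (h t)"
  shows "integrable (PiM S (\<lambda>_. P)) (\<lambda>y. \<Prod>t\<in>T. h t (y t))"
    and "(\<integral>y. (\<Prod>t\<in>T. h t (y t)) \<partial>PiM S (\<lambda>_. P)) = (\<Prod>t\<in>T. \<integral>w. h t w \<partial>P)"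
proof -
  define F where "F t w = (if t \<in> T then h t w else 1)" for t w
  have prod_F: "(\<Prod>t\<in>S. F t (y t)) = (\<Prod>t\<in>T. h t (y t))" for y
    using assms(1) S by (simp add: F_def if_distrib prod.inter_restrict[symmetric] Int_absorb1)
  have F_int: "integrable P (F t)" for t
    using assms prob_P
    by (cases "t \<in> T") (simp_all add: F_def[abs_def] prob_space.finite_measure finite_measure.integrable_const)
  have "(\<integral>w. F t w \<partial>P) = (if t \<in> T then \<integral>w. h t w \<partial>P else 1)" for t
    using prob_P by (simp add: F_def prob_space.prob_space)
  then have "(\<Prod>t\<in>S. \<integral>w. F t w \<partial>P) = (\<Prod>t\<in>T. \<integral>w. h t w \<partial>P)"
    using assms(1) S by (simp add: prod.inter_restrict[symmetric] Int_absorb1)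
  then show "integrable (PiM S (\<lambda>_. P)) (\<lambda>y. \<Prod>t\<in>T. h t (y t))"
    and "(\<integral>y. (\<Prod>t\<in>T. h t (y t)) \<partial>PiM S (\<lambda>_. P)) = (\<Prod>t\<in>T. \<integral>w. h t w \<partial>P)"
    using product_integrable_prod[OF S, of F] product_integral_prod[OF S, of F] F_int
    by (simp_all add: prod_F)
qed

lemma integral_square_average_PiM:
  fixes Y :: "'w \<Rightarrow> real" and a :: "nat \<Rightarrow> 'i"
  assumes a: "a ` {..<n} \<subseteq> S" "inj_on a {..<n}"
    and Y: "integrable P Y" "(\<integral>w. Y w \<partial>P) = 0" "integrable P (\<lambda>w. (Y w)^2)"
  shows "integrable (PiM S (\<lambda>_. P)) (\<lambda>y. ((1 / real n) * (\<Sum>j<n. Y (y (a j))))^2)"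
    and "(\<integral>y. ((1 / real n) * (\<Sum>j<n. Y (y (a j))))^2 \<partial>PiM S (\<lambda>_. P)) = (\<integral>w. (Y w)^2 \<partial>P) / real n"
proof -
  let ?M = "PiM S (\<lambda>_. P)"
  have cross: "integrable ?M (\<lambda>y. Y (y (a j)) * Y (y (a l)))
      \<and> (\<integral>y. Y (y (a j)) * Y (y (a l)) \<partial>?M) = (if j = l then \<integral>w. (Y w)^2 \<partial>P else 0)"
    if "j < n" "l < n" for j l
  proof -
    have "a j \<in> S" "a l \<in> S"
      using a(1) that by auto
    show ?thesis
    proof (cases "j = l")
      case True
      then show ?thesis
        using integral_PiM_prod_components[of "{a j}" "\<lambda>_ w. (Y w)^2"] \<open>a j \<in> S\<close> Y(3)
        by (simp add: power2_eq_square)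
    next
      case False
      then have "a j \<noteq> a l"
        using a(2) that by (auto dest: inj_onD)
      then show ?thesis
        using integral_PiM_prod_components[of "{a j, a l}" "\<lambda>_. Y"] \<open>a j \<in> S\<close> \<open>a l \<in> S\<close> Y(1,2) False
        by simp
    qed
  qed
  have square: "((1 / real n) * (\<Sum>j<n. Y (y (a j))))^2
      = (1 / real n ^ 2) * (\<Sum>j<n. \<Sum>l<n. Y (y (a j)) * Y (y (a l)))" for y
    by (simp add: power2_eq_square sum_product)
  show "integrable ?M (\<lambda>y. ((1 / real n) * (\<Sum>j<n. Y (y (a j))))^2)"
    unfolding square using cross by (intro integrable_mult_right Bochner_Integration.integrable_sum) auto
  have row: "integrable ?M (\<lambda>y. \<Sum>l<n. Y (y (a j)) * Y (y (a l)))" if "j < n" for j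
    using cross that by (intro Bochner_Integration.integrable_sum) auto
  have "(\<integral>y. (\<Sum>j<n. \<Sum>l<n. Y (y (a j)) * Y (y (a l))) \<partial>?M)
      = (\<Sum>j<n. \<integral>y. (\<Sum>l<n. Y (y (a j)) * Y (y (a l))) \<partial>?M)"
    using row by (intro Bochner_Integration.integral_sum) auto
  also have "\<dots> = (\<Sum>j<n. \<Sum>l<n. \<integral>y. Y (y (a j)) * Y (y (a l)) \<partial>?M)"
    using cross by (intro sum.cong refl Bochner_Integration.integral_sum) auto
  also have "\<dots> = real n * (\<integral>w. (Y w)^2 \<partial>P)"
    using cross by simp
  finally show "(\<integral>y. ((1 / real n) * (\<Sum>j<n. Y (y (a j))))^2 \<partial>?M) = (\<integral>w. (Y w)^2 \<partial>P) / real n"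
    unfolding square by (simp add: power2_eq_square)
qed

end

lemma (in prob_space) integral_abs_le_sqrt_integral_square:
  fixes X :: "'a \<Rightarrow> real"
  assumes "integrable M X" "integrable M (\<lambda>x. (X x)^2)"
  shows "(\<integral>x. \<bar>X x\<bar> \<partial>M) \<le> sqrt (\<integral>x. (X x)^2 \<partial>M)"
proof -
  have "0 \<le> variance (\<lambda>x. \<bar>X x\<bar>)"
    by (rule variance_positive)
  also have "variance (\<lambda>x. \<bar>X x\<bar>) = (\<integral>x. (X x)^2 \<partial>M) - (\<integral>x. \<bar>X x\<bar> \<partial>M)^2"
    using assms by (subst variance_eq) auto
  finally show ?thesis
    by (intro real_le_rsqrt) simp
qed

lemma integral_abs_average_PiM_le:
  fixes Y :: "'w \<Rightarrow> real" and a :: "nat \<Rightarrow> 'i"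
  assumes P: "prob_space P" and S: "finite S"
    and a: "a ` {..<n} \<subseteq> S" "inj_on a {..<n}"
    and Y: "integrable P Y" "(\<integral>w. Y w \<partial>P) = 0" "integrable P (\<lambda>w. (Y w)^2)"
    and var: "(\<integral>w. (Y w)^2 \<partial>P) \<le> s^2" and "0 \<le> s"
  shows "(\<integral>y. \<bar>(1 / real n) * (\<Sum>j<n. Y (y (a j)))\<bar> \<partial>PiM S (\<lambda>_. P)) \<le> s / sqrt (real n)"
proof -
  interpret PiS: prob_space "PiM S (\<lambda>_. P)"
    by (rule prob_space_PiM) (simp add: P)
  have "integrable (PiM S (\<lambda>_. P)) (\<lambda>y. Y (y (a j)))" if "j < n" for j
    using integral_PiM_prod_components(1)[OF P S, of "{a j}" "\<lambda>_. Y"] a(1) Y(1) that by auto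
  then have "integrable (PiM S (\<lambda>_. P)) (\<lambda>y. (1 / real n) * (\<Sum>j<n. Y (y (a j))))"
    by (intro integrable_mult_right Bochner_Integration.integrable_sum) auto
  then have "(\<integral>y. \<bar>(1 / real n) * (\<Sum>j<n. Y (y (a j)))\<bar> \<partial>PiM S (\<lambda>_. P))
      \<le> sqrt ((\<integral>w. (Y w)^2 \<partial>P) / real n)"
    using integral_square_average_PiM[OF P S a Y]
    by (metis PiS.integral_abs_le_sqrt_integral_square)
  also have "\<dots> \<le> sqrt (s^2 / real n)"
    using var by (intro real_sqrt_le_mono divide_right_mono) auto
  also have "\<dots> = s / sqrt (real n)"
    using \<open>0 \<le> s\<close> by (simp add: real_sqrt_divide)
  finally show ?thesis .
qed

lemma borel_measurable_vec_nth [measurable]: "(\<lambda>x::real^'d. x $ i) \<in> borel_measurable borel"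
  by (intro borel_measurable_continuous_onI linear_continuous_on bounded_linear_vec_nth)

lemma borel_measurable_norm1 [measurable]: "(norm1 :: real^'d \<Rightarrow> real) \<in> borel_measurable borel"
  unfolding norm1_def by measurable

lemma borel_measurable_sign_vec [measurable]: "(sign_vec :: real^'d \<Rightarrow> real^'d) \<in> borel_measurable borel"
proof (rule borel_measurable_euclidean_space[THEN iffD2], rule ballI)
  fix b :: "real^'d"
  assume "b \<in> Basis"
  then obtain i u where "b = axis i u"
    unfolding Basis_vec_def by blast
  then have "(\<lambda>x. sign_vec x \<bullet> b) = (\<lambda>x. sgn (x $ i) * u)"
    by (simp add: inner_axis)
  then show "(\<lambda>x. sign_vec x \<bullet> b) \<in> borel_measurable borel"
    by simp
qed

definition minibatch_grad ::
  "(real^'d \<Rightarrow> 'w \<Rightarrow> real^'d) \<Rightarrow> nat \<Rightarrow> real^'d \<Rightarrow> (nat \<times> nat \<Rightarrow> 'w) \<Rightarrow> nat \<Rightarrow> real^'d"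
where
  "minibatch_grad G n x \<omega> k = (1 / real n) *\<^sub>R (\<Sum>j<n. G x (\<omega> (k, j)))"

lemma signsgd_iter_Suc_minibatch:
  "signsgd_iter G \<delta> n x0 \<omega> (Suc k) = signsgd_iter G \<delta> n x0 \<omega> k
     - \<delta> *\<^sub>R sign_vec (minibatch_grad G n (signsgd_iter G \<delta> n x0 \<omega> k) \<omega> k)"
  by (simp add: Let_def minibatch_grad_def)

declare signsgd_iter.simps(2) [simp del]

lemma signsgd_iter_cong:
  assumes "\<And>j l. j < k \<Longrightarrow> l < n \<Longrightarrow> \<omega> (j, l) = \<omega>' (j, l)"
  shows "signsgd_iter G \<delta> n x0 \<omega> k = signsgd_iter G \<delta> n x0 \<omega>' k"
  using assms
proof (induction k)
  case (Suc k)
  then have "minibatch_grad G n x \<omega> k = minibatch_grad G n x \<omega>' k" for x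
    unfolding minibatch_grad_def by (intro arg_cong2[where f = "(*\<^sub>R)"] sum.cong) auto
  with Suc show ?case
    by (simp only: signsgd_iter_Suc_minibatch)
qed simp

lemma measurable_minibatch_grad:
  assumes G: "case_prod G \<in> borel_measurable (borel \<Otimes>\<^sub>M P)"
    and X: "X \<in> borel_measurable (PiM I (\<lambda>_. P))" and I: "\<And>j. j < n \<Longrightarrow> (k, j) \<in> I"
  shows "(\<lambda>\<omega>. minibatch_grad G n (X \<omega>) \<omega> k) \<in> borel_measurable (PiM I (\<lambda>_. P))"
proof -
  have "(\<lambda>\<omega>. G (X \<omega>) (\<omega> (k, j))) \<in> borel_measurable (PiM I (\<lambda>_. P))" if "j < n" for j
    using measurable_comp[OF measurable_Pair[OF X measurable_component_singleton[OF I[OF that]]] G]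
    by (simp add: comp_def)
  then show ?thesis
    unfolding minibatch_grad_def by (intro borel_measurable_scaleR borel_measurable_sum) auto
qed

lemma measurable_signsgd_iter:
  assumes G: "case_prod G \<in> borel_measurable (borel \<Otimes>\<^sub>M P)"
    and I: "\<And>j l. j < k \<Longrightarrow> l < n \<Longrightarrow> (j, l) \<in> I"
  shows "(\<lambda>\<omega>. signsgd_iter G \<delta> n x0 \<omega> k) \<in> borel_measurable (PiM I (\<lambda>_. P))"
  using I
proof (induction k)
  case (Suc k)
  then have [measurable]: "(\<lambda>\<omega>. signsgd_iter G \<delta> n x0 \<omega> k) \<in> borel_measurable (PiM I (\<lambda>_. P))"
    by simp
  have [measurable]: "(\<lambda>\<omega>. minibatch_grad G n (signsgd_iter G \<delta> n x0 \<omega> k) \<omega> k)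
      \<in> borel_measurable (PiM I (\<lambda>_. P))"
    using Suc.prems by (intro measurable_minibatch_grad[OF G]) auto
  show ?case
    unfolding signsgd_iter_Suc_minibatch by measurable
qed simp

lemma ennreal_sum_le_telescoping:
  fixes a b :: "nat \<Rightarrow> ennreal"
  assumes step: "\<And>k. k < K \<Longrightarrow> b k + a (Suc k) \<le> a k + D"
  shows "(\<Sum>k<K. b k) \<le> a 0 + of_nat K * D"
proof -
  have partial: "(\<Sum>k<m. b k) + a m \<le> a 0 + of_nat m * D" if "m \<le> K" for m
    using that
  proof (induction m)
    case (Suc m)
    have "(\<Sum>k<Suc m. b k) + a (Suc m) = (\<Sum>k<m. b k) + (b m + a (Suc m))"
      by (simp add: add.assoc)
    also have "\<dots> \<le> (\<Sum>k<m. b k) + (a m + D)"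
      using Suc.prems by (intro add_left_mono step) simp
    also have "\<dots> \<le> a 0 + of_nat m * D + D"
      using Suc by (simp only: add.assoc[symmetric] add_right_mono)
    also have "\<dots> = a 0 + of_nat (Suc m) * D"
      by (simp add: distrib_right add_ac)
    finally show ?case .
  qed simp
  have "(\<Sum>k<K. b k) \<le> (\<Sum>k<K. b k) + a K"
    by (rule add_increasing2) simp_all
  also have "\<dots> \<le> a 0 + of_nat K * D"
    by (rule partial) simp
  finally show ?thesis .
qed

locale signsgd_problem = P: prob_space P
  for P :: "'w measure" +
  fixes f :: "real^'d \<Rightarrow> real" and g :: "real^'d \<Rightarrow> real^'d" and f_star :: real
    and L \<sigma> :: "real^'d" and G :: "real^'d \<Rightarrow> 'w \<Rightarrow> real^'d"
  assumes has_derivative_f: "\<And>x. (f has_derivative (\<lambda>h. g x \<bullet> h)) (at x)"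
    and f_lower_bound: "\<And>x. f_star \<le> f x"
    and L_nonneg: "\<And>i. 0 \<le> L $ i"
    and smooth: "\<And>x y. \<bar>f y - f x - g x \<bullet> (y - x)\<bar> \<le> 1/2 * (\<Sum>i\<in>UNIV. L $ i * (y $ i - x $ i)^2)"
    and G_measurable: "case_prod G \<in> borel_measurable (borel \<Otimes>\<^sub>M P)"
    and G_integrable: "\<And>x. integrable P (G x)"
    and G_unbiased: "\<And>x. (\<integral>w. G x w \<partial>P) = g x"
    and G_variance_integrable: "\<And>x i. integrable P (\<lambda>w. (G x w $ i - g x $ i)^2)"
    and G_variance_le: "\<And>x i. (\<integral>w. (G x w $ i - g x $ i)^2 \<partial>P) \<le> (\<sigma> $ i)^2"
    and \<sigma>_nonneg: "\<And>i. 0 \<le> \<sigma> $ i"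
begin

lemma borel_measurable_g [measurable]: "g \<in> borel_measurable borel"
proof -
  have "g = (\<lambda>x. \<integral>w. G x w \<partial>P)"
    using G_unbiased by auto
  then show ?thesis
    using P.borel_measurable_lebesgue_integral[OF G_measurable] by simp
qed

lemma borel_measurable_f [measurable]: "f \<in> borel_measurable borel"
  by (meson borel_measurable_continuous_onI continuous_at_imp_continuous_on
      has_derivative_continuous has_derivative_f)

lemma noise_integrable: "integrable P (\<lambda>w. G x w $ i - g x $ i)"
  using integrable_bounded_linear[OF bounded_linear_vec_nth G_integrable] by auto

lemma noise_mean_zero: "(\<integral>w. G x w $ i - g x $ i \<partial>P) = 0"
  using integrable_bounded_linear[OF bounded_linear_vec_nth G_integrable]
  by (simp add: integral_bounded_linear[OF bounded_linear_vec_nth G_integrable] G_unbiased P.prob_space)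

lemma minibatch_grad_minus_nth:
  fixes \<omega> :: "nat \<times> nat \<Rightarrow> 'w"
  assumes "0 < n"
  shows "minibatch_grad G n x \<omega> k $ i - g x $ i = (1 / real n) * (\<Sum>j<n. G x (\<omega> (k, j)) $ i - g x $ i)"
  using assms by (simp add: minibatch_grad_def sum_subtractf field_simps)

lemma nn_integral_minibatch_noise_le:
  assumes R: "finite R" and batch: "\<And>j. j < n \<Longrightarrow> (k, j) \<in> R"
  shows "(\<integral>\<^sup>+z. ennreal \<bar>(1 / real n) * (\<Sum>j<n. G x (z (k, j)) $ i - g x $ i)\<bar> \<partial>PiM R (\<lambda>_. P))
    \<le> ennreal (\<sigma> $ i / sqrt (real n))"
proof -
  let ?Y = "\<lambda>w. G x w $ i - g x $ i"
  have "(\<integral>z. \<bar>(1 / real n) * (\<Sum>j<n. ?Y (z (k, j)))\<bar> \<partial>PiM R (\<lambda>_. P)) \<le> \<sigma> $ i / sqrt (real n)"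
    using batch noise_integrable noise_mean_zero G_variance_integrable G_variance_le \<sigma>_nonneg
    by (intro integral_abs_average_PiM_le[OF P.prob_space_axioms R]) (auto simp: inj_on_def)
  moreover have "integrable (PiM R (\<lambda>_. P)) (\<lambda>z. (1 / real n) * (\<Sum>j<n. ?Y (z (k, j))))"
    using batch integral_PiM_prod_components(1)[OF P.prob_space_axioms R, of "{(k, _)}" "\<lambda>_. ?Y"] noise_integrable
    by (intro integrable_mult_right Bochner_Integration.integrable_sum) auto
  ultimately show ?thesis
    by (subst nn_integral_eq_integral[OF integrable_abs]) (auto intro: ennreal_leI)
qed

context
  fixes \<delta> :: real and n K :: nat and x0 :: "real^'d"
  assumes \<delta>_pos: "0 < \<delta>" and n_pos: "0 < n"
begin

abbreviation "\<Omega> \<equiv> PiM ({..<K} \<times> {..<n}) (\<lambda>_. P)"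

abbreviation "iterate \<omega> k \<equiv> signsgd_iter G \<delta> n x0 \<omega> k"

lemma measurable_iterate [measurable]: "k \<le> K \<Longrightarrow> (\<lambda>\<omega>. iterate \<omega> k) \<in> borel_measurable \<Omega>"
  by (intro measurable_signsgd_iter[OF G_measurable]) auto

lemma measurable_minibatch_iterate [measurable]:
  "k < K \<Longrightarrow> (\<lambda>\<omega>. minibatch_grad G n (iterate \<omega> k) \<omega> k) \<in> borel_measurable \<Omega>"
  by (intro measurable_minibatch_grad[OF G_measurable] measurable_iterate) auto

lemma nn_integral_minibatch_error_le:
  assumes k: "k < K"
  shows "(\<integral>\<^sup>+\<omega>. ennreal \<bar>minibatch_grad G n (iterate \<omega> k) \<omega> k $ i - g (iterate \<omega> k) $ i\<bar> \<partial>\<Omega>)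
    \<le> ennreal (\<sigma> $ i / sqrt (real n))"
proof -
  \<comment> \<open>The iterate \<open>x\<^sub>k\<close> only sees the batches in \<open>J\<close>; integrate the current batch first.\<close>
  define J where "J = {..<k} \<times> {..<n}"
  define R where "R = {..<K} \<times> {..<n} - J"
  have IJ: "{..<K} \<times> {..<n} = J \<union> R" "J \<inter> R = {}" "finite J" "finite R"
    using k by (auto simp: J_def R_def)
  interpret product_sigma_finite "\<lambda>_. P"
    by (simp add: product_sigma_finite_def prob_space_imp_sigma_finite P.prob_space_axioms)
  define F where "F \<omega> = ennreal \<bar>minibatch_grad G n (iterate \<omega> k) \<omega> k $ i - g (iterate \<omega> k) $ i\<bar>" for \<omega>
  have F_merge: "F (merge J R (y, z)) = ennreal \<bar>(1 / real n) * (\<Sum>j<n. G (iterate y k) (z (k, j)) $ i - g (iterate y k) $ i)\<bar>"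
    for y z
  proof -
    have "iterate (merge J R (y, z)) k = iterate y k"
      by (rule signsgd_iter_cong) (auto simp: J_def merge_def)
    moreover have "minibatch_grad G n x (merge J R (y, z)) k = minibatch_grad G n x z k" for x
      using k unfolding minibatch_grad_def by (intro arg_cong2[where f = "(*\<^sub>R)"] sum.cong) (auto simp: J_def R_def merge_def)
    ultimately show ?thesis
      unfolding F_def by (simp add: minibatch_grad_minus_nth[OF n_pos])
  qed
  have fresh_batch: "(\<integral>\<^sup>+z. F (merge J R (y, z)) \<partial>PiM R (\<lambda>_. P)) \<le> ennreal (\<sigma> $ i / sqrt (real n))" for y
    unfolding F_merge using k IJ(4) by (intro nn_integral_minibatch_noise_le) (auto simp: R_def J_def)
  have "(\<integral>\<^sup>+\<omega>. F \<omega> \<partial>\<Omega>) = (\<integral>\<^sup>+y. (\<integral>\<^sup>+z. F (merge J R (y, z)) \<partial>PiM R (\<lambda>_. P)) \<partial>PiM J (\<lambda>_. P))"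
    unfolding IJ(1) using k by (intro product_nn_integral_fold IJ(2-4)) (simp add: F_def IJ(1)[symmetric])
  also have "\<dots> \<le> (\<integral>\<^sup>+y. ennreal (\<sigma> $ i / sqrt (real n)) \<partial>PiM J (\<lambda>_. P))"
    by (intro nn_integral_mono fresh_batch)
  also have "\<dots> = ennreal (\<sigma> $ i / sqrt (real n))"
    using prob_space.emeasure_space_1[OF prob_space_PiM, of J "\<lambda>_. P"] P.prob_space_axioms by simp
  finally show ?thesis
    unfolding F_def .
qed

lemma nn_integral_minibatch_norm1_error_le:
  assumes "k < K"
  shows "(\<integral>\<^sup>+\<omega>. ennreal (norm1 (minibatch_grad G n (iterate \<omega> k) \<omega> k - g (iterate \<omega> k))) \<partial>\<Omega>)
    \<le> ennreal (norm1 \<sigma> / sqrt (real n))"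
proof -
  have "(\<integral>\<^sup>+\<omega>. ennreal (norm1 (minibatch_grad G n (iterate \<omega> k) \<omega> k - g (iterate \<omega> k))) \<partial>\<Omega>)
      = (\<Sum>i\<in>UNIV. \<integral>\<^sup>+\<omega>. ennreal \<bar>minibatch_grad G n (iterate \<omega> k) \<omega> k $ i - g (iterate \<omega> k) $ i\<bar> \<partial>\<Omega>)"
  proof -
    have "ennreal (norm1 (v - w)) = (\<Sum>i\<in>UNIV. ennreal \<bar>v $ i - w $ i\<bar>)" for v w :: "real^'d"
      by (simp add: norm1_def sum_ennreal)
    then show ?thesis
      using assms by (simp only:) (rule nn_integral_sum, measurable)
  qed
  also have "\<dots> \<le> (\<Sum>i\<in>UNIV. ennreal (\<sigma> $ i / sqrt (real n)))"
    using assms by (intro sum_mono nn_integral_minibatch_error_le)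
  also have "\<dots> = ennreal (norm1 \<sigma> / sqrt (real n))"
    using \<sigma>_nonneg by (simp add: norm1_def sum_divide_distrib sum_ennreal)
  finally show ?thesis .
qed

text \<open>Expectations are nonnegative integrals: \<open>f\<close> along the iterates need not be integrable.\<close>

lemma expected_descent_step:
  assumes k: "k < K"
  shows "(\<integral>\<^sup>+\<omega>. ennreal (\<delta> * norm1 (g (iterate \<omega> k))) \<partial>\<Omega>)
      + (\<integral>\<^sup>+\<omega>. ennreal (f (iterate \<omega> (Suc k)) - f_star) \<partial>\<Omega>)
    \<le> (\<integral>\<^sup>+\<omega>. ennreal (f (iterate \<omega> k) - f_star) \<partial>\<Omega>)
      + ennreal (\<delta>^2 / 2 * norm1 L + 2 * \<delta> * norm1 \<sigma> / sqrt (real n))"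
proof -
  interpret \<Omega>: prob_space \<Omega>
    by (simp add: prob_space_PiM P.prob_space_axioms)
  define c where "c = \<delta>^2 / 2 * norm1 L"
  define e where "e \<omega> = norm1 (minibatch_grad G n (iterate \<omega> k) \<omega> k - g (iterate \<omega> k))" for \<omega>
  have [measurable]: "(\<lambda>\<omega>. iterate \<omega> k) \<in> borel_measurable \<Omega>"
      "(\<lambda>\<omega>. iterate \<omega> (Suc k)) \<in> borel_measurable \<Omega>"
      "(\<lambda>\<omega>. minibatch_grad G n (iterate \<omega> k) \<omega> k) \<in> borel_measurable \<Omega>"
    using k by (auto intro!: measurable_iterate measurable_minibatch_iterate)
  have [measurable]: "e \<in> borel_measurable \<Omega>"
    using k unfolding e_def[abs_def] by measurable
  have "0 \<le> c" "\<And>\<omega>. 0 \<le> e \<omega>"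
    using norm1_nonneg[of L] norm1_nonneg unfolding c_def e_def by auto
  have pointwise: "ennreal (\<delta> * norm1 (g (iterate \<omega> k))) + ennreal (f (iterate \<omega> (Suc k)) - f_star)
      \<le> ennreal (f (iterate \<omega> k) - f_star) + ennreal c + ennreal (2 * \<delta>) * ennreal (e \<omega>)" for \<omega>
  proof -
    have "\<delta> * norm1 (g (iterate \<omega> k)) + (f (iterate \<omega> (Suc k)) - f_star)
        \<le> (f (iterate \<omega> k) - f_star) + c + 2 * \<delta> * e \<omega>"
      using sign_step_descent[OF smooth L_nonneg, of \<delta> "iterate \<omega> k" "minibatch_grad G n (iterate \<omega> k) \<omega> k"]
        \<delta>_pos
      unfolding signsgd_iter_Suc_minibatch c_def e_def by linarith
    then have "ennreal (\<delta> * norm1 (g (iterate \<omega> k)) + (f (iterate \<omega> (Suc k)) - f_star))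
        \<le> ennreal ((f (iterate \<omega> k) - f_star) + c + 2 * \<delta> * e \<omega>)"
      by (rule ennreal_leI)
    moreover have "0 \<le> \<delta> * norm1 (g (iterate \<omega> k))"
      using \<delta>_pos by (intro mult_nonneg_nonneg norm1_nonneg) simp
    ultimately show ?thesis
      using \<delta>_pos f_lower_bound \<open>0 \<le> c\<close> \<open>0 \<le> e \<omega>\<close>
      by (simp add: ennreal_plus ennreal_mult)
  qed
  have "(\<integral>\<^sup>+\<omega>. ennreal (\<delta> * norm1 (g (iterate \<omega> k))) \<partial>\<Omega>)
      + (\<integral>\<^sup>+\<omega>. ennreal (f (iterate \<omega> (Suc k)) - f_star) \<partial>\<Omega>)
    = (\<integral>\<^sup>+\<omega>. ennreal (\<delta> * norm1 (g (iterate \<omega> k))) + ennreal (f (iterate \<omega> (Suc k)) - f_star) \<partial>\<Omega>)"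
    using k by (intro nn_integral_add[symmetric]) auto
  also have "\<dots> \<le> (\<integral>\<^sup>+\<omega>. ennreal (f (iterate \<omega> k) - f_star) + ennreal c + ennreal (2 * \<delta>) * ennreal (e \<omega>) \<partial>\<Omega>)"
    by (intro nn_integral_mono pointwise)
  also have "\<dots> = (\<integral>\<^sup>+\<omega>. ennreal (f (iterate \<omega> k) - f_star) + ennreal c \<partial>\<Omega>)
      + (\<integral>\<^sup>+\<omega>. ennreal (2 * \<delta>) * ennreal (e \<omega>) \<partial>\<Omega>)"
    using k by (intro nn_integral_add) auto
  also have "\<dots> = (\<integral>\<^sup>+\<omega>. ennreal (f (iterate \<omega> k) - f_star) \<partial>\<Omega>) + ennreal c
      + ennreal (2 * \<delta>) * (\<integral>\<^sup>+\<omega>. ennreal (e \<omega>) \<partial>\<Omega>)"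
    using k by (subst nn_integral_add) (simp_all add: nn_integral_cmult \<Omega>.emeasure_space_1)
  also have "\<dots> \<le> (\<integral>\<^sup>+\<omega>. ennreal (f (iterate \<omega> k) - f_star) \<partial>\<Omega>) + ennreal c
      + ennreal (2 * \<delta>) * ennreal (norm1 \<sigma> / sqrt (real n))"
    using nn_integral_minibatch_norm1_error_le[OF k] unfolding e_def
    by (intro add_left_mono mult_left_mono) auto
  also have "\<dots> = (\<integral>\<^sup>+\<omega>. ennreal (f (iterate \<omega> k) - f_star) \<partial>\<Omega>)
      + ennreal (c + 2 * \<delta> * norm1 \<sigma> / sqrt (real n))"
  proof -
    have "ennreal (2 * \<delta>) * ennreal (norm1 \<sigma> / sqrt (real n)) = ennreal (2 * \<delta> * norm1 \<sigma> / sqrt (real n))"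
      using \<delta>_pos norm1_nonneg[of \<sigma>] by (subst ennreal_mult[symmetric]) auto
    then show ?thesis
      using \<delta>_pos \<open>0 \<le> c\<close> norm1_nonneg[of \<sigma>] by (simp add: ennreal_plus add.assoc)
  qed
  finally show ?thesis
    unfolding c_def .
qed

lemma expected_descent_sum:
  "(\<Sum>k<K. \<integral>\<^sup>+\<omega>. ennreal (\<delta> * norm1 (g (iterate \<omega> k))) \<partial>\<Omega>)
    \<le> ennreal (f x0 - f_star) + of_nat K * ennreal (\<delta>^2 / 2 * norm1 L + 2 * \<delta> * norm1 \<sigma> / sqrt (real n))"
proof -
  interpret \<Omega>: prob_space \<Omega>
    by (simp add: prob_space_PiM P.prob_space_axioms)
  have "(\<Sum>k<K. \<integral>\<^sup>+\<omega>. ennreal (\<delta> * norm1 (g (iterate \<omega> k))) \<partial>\<Omega>)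
      \<le> (\<integral>\<^sup>+\<omega>. ennreal (f (iterate \<omega> 0) - f_star) \<partial>\<Omega>)
        + of_nat K * ennreal (\<delta>^2 / 2 * norm1 L + 2 * \<delta> * norm1 \<sigma> / sqrt (real n))"
    by (rule ennreal_sum_le_telescoping[where a = "\<lambda>k. \<integral>\<^sup>+\<omega>. ennreal (f (iterate \<omega> k) - f_star) \<partial>\<Omega>"])
      (rule expected_descent_step)
  then show ?thesis
    by (simp add: \<Omega>.emeasure_space_1)
qed

lemma nn_integral_average_grad_norm1:
  "(\<integral>\<^sup>+\<omega>. ennreal ((1 / real K) * (\<Sum>k<K. norm1 (g (iterate \<omega> k)))) \<partial>\<Omega>)
    = ennreal (1 / (real K * \<delta>)) * (\<Sum>k<K. \<integral>\<^sup>+\<omega>. ennreal (\<delta> * norm1 (g (iterate \<omega> k))) \<partial>\<Omega>)"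
proof -
  have average: "ennreal ((1 / real K) * (\<Sum>k<K. norm1 (g (iterate \<omega> k))))
      = ennreal (1 / (real K * \<delta>)) * (\<Sum>k<K. ennreal (\<delta> * norm1 (g (iterate \<omega> k))))" for \<omega>
  proof -
    have "(\<Sum>k<K. ennreal (\<delta> * norm1 (g (iterate \<omega> k)))) = ennreal (\<delta> * (\<Sum>k<K. norm1 (g (iterate \<omega> k))))"
      using \<delta>_pos by (simp add: sum_ennreal sum_distrib_left norm1_nonneg)
    moreover have "(1 / real K) * (\<Sum>k<K. norm1 (g (iterate \<omega> k)))
        = 1 / (real K * \<delta>) * (\<delta> * (\<Sum>k<K. norm1 (g (iterate \<omega> k))))"
      using \<delta>_pos by simp
    ultimately show ?thesis
      using \<delta>_pos by (simp only:) (intro ennreal_mult mult_nonneg_nonneg sum_nonneg norm1_nonneg; simp)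
  qed
  have meas: "(\<lambda>\<omega>. ennreal (\<delta> * norm1 (g (iterate \<omega> k)))) \<in> borel_measurable \<Omega>" if "k < K" for k
  proof -
    have [measurable]: "(\<lambda>\<omega>. iterate \<omega> k) \<in> borel_measurable \<Omega>"
      using that by (simp add: measurable_iterate)
    show ?thesis
      by measurable
  qed
  then have "(\<integral>\<^sup>+\<omega>. (\<Sum>k<K. ennreal (\<delta> * norm1 (g (iterate \<omega> k)))) \<partial>\<Omega>)
      = (\<Sum>k<K. \<integral>\<^sup>+\<omega>. ennreal (\<delta> * norm1 (g (iterate \<omega> k))) \<partial>\<Omega>)"
    by (intro nn_integral_sum) auto
  moreover have "(\<lambda>\<omega>. \<Sum>k<K. ennreal (\<delta> * norm1 (g (iterate \<omega> k)))) \<in> borel_measurable \<Omega>"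
    using meas by (intro borel_measurable_sum) auto
  ultimately show ?thesis
    unfolding average by (simp add: nn_integral_cmult)
qed

lemma expected_average_grad_norm1_le:
  assumes "0 < K"
  shows "(\<integral>\<omega>. (1 / real K) * (\<Sum>k<K. norm1 (g (iterate \<omega> k))) \<partial>\<Omega>)
    \<le> (f x0 - f_star) / (real K * \<delta>) + \<delta> / 2 * norm1 L + 2 * norm1 \<sigma> / sqrt (real n)"
proof (rule integral_real_bounded)
  define D where "D = \<delta>^2 / 2 * norm1 L + 2 * \<delta> * norm1 \<sigma> / sqrt (real n)"
  have "0 \<le> D" "0 \<le> f x0 - f_star"
    using \<delta>_pos norm1_nonneg[of L] norm1_nonneg[of \<sigma>] f_lower_bound unfolding D_def by auto
  have rhs: "(f x0 - f_star) / (real K * \<delta>) + \<delta> / 2 * norm1 L + 2 * norm1 \<sigma> / sqrt (real n)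
      = 1 / (real K * \<delta>) * (f x0 - f_star + real K * D)"
    using assms \<delta>_pos unfolding D_def by (simp add: field_simps power2_eq_square)
  then show "0 \<le> (f x0 - f_star) / (real K * \<delta>) + \<delta> / 2 * norm1 L + 2 * norm1 \<sigma> / sqrt (real n)"
    using assms \<delta>_pos \<open>0 \<le> D\<close> \<open>0 \<le> f x0 - f_star\<close> by simp
  have "(\<integral>\<^sup>+\<omega>. ennreal ((1 / real K) * (\<Sum>k<K. norm1 (g (iterate \<omega> k)))) \<partial>\<Omega>)
      = ennreal (1 / (real K * \<delta>)) * (\<Sum>k<K. \<integral>\<^sup>+\<omega>. ennreal (\<delta> * norm1 (g (iterate \<omega> k))) \<partial>\<Omega>)"
    by (rule nn_integral_average_grad_norm1)
  also have "\<dots> \<le> ennreal (1 / (real K * \<delta>)) * (ennreal (f x0 - f_star) + of_nat K * ennreal D)"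
    unfolding D_def by (intro mult_left_mono expected_descent_sum) simp
  also have "ennreal (f x0 - f_star) + of_nat K * ennreal D = ennreal (f x0 - f_star + real K * D)"
    using \<open>0 \<le> D\<close> \<open>0 \<le> f x0 - f_star\<close> by (simp add: ennreal_plus ennreal_mult ennreal_of_nat_eq_real_of_nat)
  also have "ennreal (1 / (real K * \<delta>)) * \<dots> = ennreal (1 / (real K * \<delta>) * (f x0 - f_star + real K * D))"
    using assms \<delta>_pos \<open>0 \<le> D\<close> \<open>0 \<le> f x0 - f_star\<close> by (intro ennreal_mult[symmetric]) auto
  finally show "(\<integral>\<^sup>+\<omega>. ennreal ((1 / real K) * (\<Sum>k<K. norm1 (g (iterate \<omega> k)))) \<partial>\<Omega>)
      \<le> ennreal ((f x0 - f_star) / (real K * \<delta>) + \<delta> / 2 * norm1 L + 2 * norm1 \<sigma> / sqrt (real n))"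
    unfolding rhs .
qed

end

end

lemma step_size_balance:
  fixes l F s :: real and K :: nat
  assumes "0 < l" "0 < K"
  shows "F / (real K * (1 / sqrt (l * real K))) + 1 / sqrt (l * real K) / 2 * l + 2 * s / sqrt (real K)
    = (sqrt l * (F + 1/2) + 2 * s) / sqrt (real K)"
proof -
  define u v where "u = sqrt l" and "v = sqrt (real K)"
  have "0 < u" "l = u^2" "0 < v" "real K = v^2"
    using assms by (simp_all add: u_def v_def)
  moreover have "sqrt (l * real K) = u * v"
    by (simp add: u_def v_def real_sqrt_mult)
  ultimately show ?thesis
    unfolding u_def[symmetric] v_def[symmetric] by (simp add: field_simps power2_eq_square)
qed

theorem theorem1:
  fixes f :: "real^'d \<Rightarrow> real" and g :: "real^'d \<Rightarrow> real^'d"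
    and f_star :: real and L \<sigma> :: "real^'d"
    and P :: "'w measure" and G :: "real^'d \<Rightarrow> 'w \<Rightarrow> real^'d"
    and K :: nat and x0 :: "real^'d"
  assumes grad: "\<And>x. (f has_derivative (\<lambda>h. g x \<bullet> h)) (at x)"
    and A1: "\<And>x. f x \<ge> f_star"
    and A2_nonneg: "\<And>i. L $ i \<ge> 0"
    and A2: "\<And>x y. \<bar>f y - f x - g x \<bullet> (y - x)\<bar> \<le> 1/2 * (\<Sum>i\<in>UNIV. L $ i * (y $ i - x $ i)^2)"
    and A3_prob: "prob_space P"
    and A3_meas: "case_prod G \<in> borel_measurable (borel \<Otimes>\<^sub>M P)"
    and A3_int: "\<And>x. integrable P (G x)"
    and A3_unbiased: "\<And>x. (\<integral>w. G x w \<partial>P) = g x"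
    and A3_var_int: "\<And>x i. integrable P (\<lambda>w. (G x w $ i - g x $ i)^2)"
    and A3_var: "\<And>x i. (\<integral>w. (G x w $ i - g x $ i)^2 \<partial>P) \<le> (\<sigma> $ i)^2"
    and \<sigma>_nonneg: "\<And>i. \<sigma> $ i \<ge> 0"
    and L_pos: "norm1 L > 0"
    and K_pos: "K \<ge> 1"
  shows "(\<integral>\<omega>. (1 / real K) * (\<Sum>k<K. norm1 (g (signsgd_iter G (1 / sqrt (norm1 L * real K)) K x0 \<omega> k)))
            \<partial>(PiM ({..<K} \<times> {..<K}) (\<lambda>_. P)))^2
         \<le> 1 / sqrt (real (K^2)) * (sqrt (norm1 L) * (f x0 - f_star + 1/2) + 2 * norm1 \<sigma>)^2"
proof -
  interpret signsgd_problem P f g f_star L \<sigma> G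
    by (intro signsgd_problem.intro signsgd_problem_axioms.intro assms)
  define \<delta> where "\<delta> = 1 / sqrt (norm1 L * real K)"
  have "0 < \<delta>" "0 < K"
    using L_pos K_pos by (auto simp: \<delta>_def)
  let ?average = "\<lambda>\<omega>. (1 / real K) * (\<Sum>k<K. norm1 (g (signsgd_iter G \<delta> K x0 \<omega> k)))"
  let ?bound = "(sqrt (norm1 L) * (f x0 - f_star + 1/2) + 2 * norm1 \<sigma>) / sqrt (real K)"
  have "(\<integral>\<omega>. ?average \<omega> \<partial>PiM ({..<K} \<times> {..<K}) (\<lambda>_. P)) \<le> ?bound"
    using expected_average_grad_norm1_le[OF \<open>0 < \<delta>\<close> \<open>0 < K\<close> \<open>0 < K\<close>, of x0]
      step_size_balance[OF L_pos \<open>0 < K\<close>, of "f x0 - f_star" "norm1 \<sigma>"]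
    unfolding \<delta>_def by simp
  moreover have "0 \<le> (\<integral>\<omega>. ?average \<omega> \<partial>PiM ({..<K} \<times> {..<K}) (\<lambda>_. P))"
    by (intro Bochner_Integration.integral_nonneg mult_nonneg_nonneg sum_nonneg norm1_nonneg) simp
  ultimately have "(\<integral>\<omega>. ?average \<omega> \<partial>PiM ({..<K} \<times> {..<K}) (\<lambda>_. P))^2 \<le> ?bound^2"
    by (intro power_mono)
  also have "?bound^2 = 1 / sqrt (real (K^2)) * (sqrt (norm1 L) * (f x0 - f_star + 1/2) + 2 * norm1 \<sigma>)^2"
    by (simp add: power_divide)
  finally show ?thesis
    unfolding \<delta>_def .
qed

end
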